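(* There is a polynomial $\mathit{pol}$, independent of $\langle\mathcal{I},\eta\rangle$ (depending only on the fixed database schema), such that if a database with integrity constraints $\langle\mathcal{I},\eta\rangle$ (in the setting described below) is consistent, then it has a possible world $V$ with $\mathit{size}(V)=O(\mathit{pol}(\mathit{size}(\mathcal{I})+\mathit{size}(\eta)))$.
   Context: Constants: $\mathit{Dom}=\{\bot,1,2,\dots\}$ with $\bot$ the null value, $\mathit{Dom}_d=\{1,2,\dots\}$ (integers written in binary/decimal); the only built-in relations are $=$ and $\le$. The set of base predicate symbols (number and arities) is fixed. $\mathit{size}(\cdot)$ is the size of the representation. Facts are ground atoms; definite facts contain no $\bot$. For tuples, $t\preceq t'$ if each $t_i=t'_i$ or $t_i=\bot$; $a\approx b$ if some $s$ has $a\preceq s,b\preceq s$. For a set $S$ of facts: $S^\Downarrow=\{a:\exists b\in S,a\preceq b\}$, $S^\Uparrow=\{a:\exists b\in S,b\preceq a\}$, $S^\approx=\{a:\exists b\in S,b\approx a\}$, $S^\sim=S^\approx\setminus S^\Downarrow$. A database is $\mathcal{I}=\langle D,E\rangle$, $D,E$ finite sets of base facts; $\mathcal{I}_t=D^\Downarrow$, $\mathcal{I}_u=D^\sim\setminus E^\Uparrow$; a possible world of $\mathcal{I}$ is a set $W$ of definite facts with $\mathcal{I}_t\subseteq W^\Downarrow$ and $W\subseteq\mathcal{I}_t\cup\mathcal{I}_u$. Integrity constraints have the form $\exists X\,\forall Y\,(A_1\wedge\dots\wedge A_k\rightarrow B_1\vee\dots\vee B_m)$, atoms without $\bot$ over base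 and built-in predicates, every variable in $X\cup Y$ and occurring in some base-predicate $A_i$. A possible world of $\langle\mathcal{I},\eta\rangle$ is a possible world of $\mathcal{I}$ satisfying every constraint of $\eta$ (as an interpretation with domain $\mathit{Dom}_d$); $\langle\mathcal{I},\eta\rangle$ is consistent if one exists. *)

theory Defs
  imports "HOL-Computational_Algebra.Polynomial"
begin

text \<open>Dom = {bot,1,2,...} is encoded as nat, with 0 playing the role of the null value bot;
  Dom_d = {1,2,...} are the positive naturals.\<close>

type_synonym val = nat

definition nullv :: val where "nullv = 0"

definition definite_val :: "val \<Rightarrow> bool" where
  "definite_val v \<longleftrightarrow> v \<noteq> nullv"

fun bitlen :: "nat \<Rightarrow> nat" where
  "bitlen n = (if n \<le> 1 then 1 else Suc (bitlen (n div 2)))"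

text \<open>A fact over predicate symbols 'p is a predicate symbol with an argument tuple.
  The schema is given by an arity function on a finite type of predicate symbols.\<close>

type_synonym 'p fact = "'p \<times> val list"

definition base_fact :: "('p \<Rightarrow> nat) \<Rightarrow> 'p fact \<Rightarrow> bool" where
  "base_fact ar f \<longleftrightarrow> length (snd f) = ar (fst f)"

definition definite_fact :: "'p fact \<Rightarrow> bool" where
  "definite_fact f \<longleftrightarrow> (\<forall>v\<in>set (snd f). definite_val v)"

definition fact_size :: "'p fact \<Rightarrow> nat" where
  "fact_size f = 1 + (\<Sum>v\<leftarrow>snd f. bitlen v)"

definition facts_size :: "'p fact set \<Rightarrow> nat" where
  "facts_size S = (\<Sum>f\<in>S. fact_size f)"

definition less_inf :: "'p fact \<Rightarrow> 'p fact \<Rightarrow> bool" where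
  "less_inf a b \<longleftrightarrow> fst a = fst b \<and> length (snd a) = length (snd b) \<and>
     (\<forall>i < length (snd a). snd a ! i = snd b ! i \<or> snd a ! i = nullv)"

definition compat :: "'p fact \<Rightarrow> 'p fact \<Rightarrow> bool" where
  "compat a b \<longleftrightarrow> (\<exists>s. less_inf a s \<and> less_inf b s)"

definition down :: "'p fact set \<Rightarrow> 'p fact set" where
  "down S = {a. \<exists>b\<in>S. less_inf a b}"

definition up :: "'p fact set \<Rightarrow> 'p fact set" where
  "up S = {a. \<exists>b\<in>S. less_inf b a}"

definition compat_set :: "'p fact set \<Rightarrow> 'p fact set" where
  "compat_set S = {a. \<exists>b\<in>S. compat b a}"

definition tilde :: "'p fact set \<Rightarrow> 'p fact set" where
  "tilde S = compat_set S - down S"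

type_synonym 'p db = "'p fact set \<times> 'p fact set"

definition wf_db :: "('p \<Rightarrow> nat) \<Rightarrow> 'p db \<Rightarrow> bool" where
  "wf_db ar I \<longleftrightarrow> finite (fst I) \<and> finite (snd I) \<and>
     (\<forall>f\<in>fst I. base_fact ar f) \<and> (\<forall>f\<in>snd I. base_fact ar f)"

definition db_size :: "'p db \<Rightarrow> nat" where
  "db_size I = facts_size (fst I) + facts_size (snd I)"

definition I_t :: "'p db \<Rightarrow> 'p fact set" where
  "I_t I = down (fst I)"

definition I_u :: "'p db \<Rightarrow> 'p fact set" where
  "I_u I = tilde (fst I) - up (snd I)"

definition possible_world :: "'p db \<Rightarrow> 'p fact set \<Rightarrow> bool" where
  "possible_world I W \<longleftrightarrow> (\<forall>f\<in>W. definite_fact f) \<and>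
     I_t I \<subseteq> down W \<and> W \<subseteq> I_t I \<union> I_u I"

datatype trm = Var nat | Const nat

datatype 'p atom = Base 'p "trm list" | Eq trm trm | Leq trm trm

text \<open>Constraint \<exists>X \<forall>Y (A_1 \<and> ... \<and> A_k \<longrightarrow> B_1 \<or> ... \<or> B_m).\<close>
datatype 'p constr = Constr (exvars: "nat list") (allvars: "nat list")
                            (body: "'p atom list") (head: "'p atom list")

fun trm_vars :: "trm \<Rightarrow> nat set" where
  "trm_vars (Var x) = {x}"
| "trm_vars (Const c) = {}"

fun trm_ok :: "trm \<Rightarrow> bool" where
  "trm_ok (Var x) = True"
| "trm_ok (Const c) = definite_val c"

fun atom_vars :: "'p atom \<Rightarrow> nat set" where
  "atom_vars (Base p ts) = (\<Union>t\<in>set ts. trm_vars t)"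
| "atom_vars (Eq s t) = trm_vars s \<union> trm_vars t"
| "atom_vars (Leq s t) = trm_vars s \<union> trm_vars t"

fun atom_wf :: "('p \<Rightarrow> nat) \<Rightarrow> 'p atom \<Rightarrow> bool" where
  "atom_wf ar (Base p ts) = (length ts = ar p \<and> (\<forall>t\<in>set ts. trm_ok t))"
| "atom_wf ar (Eq s t) = (trm_ok s \<and> trm_ok t)"
| "atom_wf ar (Leq s t) = (trm_ok s \<and> trm_ok t)"

fun is_base :: "'p atom \<Rightarrow> bool" where
  "is_base (Base p ts) = True"
| "is_base _ = False"

definition constr_wf :: "('p \<Rightarrow> nat) \<Rightarrow> 'p constr \<Rightarrow> bool" where
  "constr_wf ar c \<longleftrightarrow>
     (\<forall>a\<in>set (body c) \<union> set (head c). atom_wf ar a \<and> atom_vars a \<subseteq> set (exvars c) \<union> set (allvars c)) \<and>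
     (\<forall>x\<in>set (exvars c) \<union> set (allvars c). \<exists>a\<in>set (body c). is_base a \<and> x \<in> atom_vars a)"

fun trm_eval :: "(nat \<Rightarrow> val) \<Rightarrow> trm \<Rightarrow> val" where
  "trm_eval \<sigma> (Var x) = \<sigma> x"
| "trm_eval \<sigma> (Const c) = c"

fun atom_holds :: "'p fact set \<Rightarrow> (nat \<Rightarrow> val) \<Rightarrow> 'p atom \<Rightarrow> bool" where
  "atom_holds W \<sigma> (Base p ts) = ((p, map (trm_eval \<sigma>) ts) \<in> W)"
| "atom_holds W \<sigma> (Eq s t) = (trm_eval \<sigma> s = trm_eval \<sigma> t)"
| "atom_holds W \<sigma> (Leq s t) = (trm_eval \<sigma> s \<le> trm_eval \<sigma> t)"

text \<open>Satisfaction with domain Dom_d: variables range over definite values.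
  The universally quantified variables Y override (shadow) X.\<close>
definition satisfies :: "'p fact set \<Rightarrow> 'p constr \<Rightarrow> bool" where
  "satisfies W c \<longleftrightarrow>
     (\<exists>\<sigma>. (\<forall>x\<in>set (exvars c). definite_val (\<sigma> x)) \<and>
       (\<forall>\<tau>. (\<forall>y\<in>set (allvars c). definite_val (\<tau> y)) \<and>
             (\<forall>x. x \<notin> set (allvars c) \<longrightarrow> \<tau> x = \<sigma> x) \<longrightarrow>
             (\<forall>a\<in>set (body c). atom_holds W \<tau> a) \<longrightarrow> (\<exists>b\<in>set (head c). atom_holds W \<tau> b)))"

definition constr_size :: "'p constr \<Rightarrow> nat" where
  "constr_size c = 1 + length (exvars c) + length (allvars c) +
     (\<Sum>a\<leftarrow>body c @ head c. 1 + (case a of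
        Base p ts \<Rightarrow> (\<Sum>t\<leftarrow>ts. (case t of Var x \<Rightarrow> 1 | Const k \<Rightarrow> bitlen k))
      | Eq s t \<Rightarrow> (case s of Var x \<Rightarrow> 1 | Const k \<Rightarrow> bitlen k) + (case t of Var x \<Rightarrow> 1 | Const k \<Rightarrow> bitlen k)
      | Leq s t \<Rightarrow> (case s of Var x \<Rightarrow> 1 | Const k \<Rightarrow> bitlen k) + (case t of Var x \<Rightarrow> 1 | Const k \<Rightarrow> bitlen k)))"

definition constrs_size :: "'p constr list \<Rightarrow> nat" where
  "constrs_size \<eta> = (\<Sum>c\<leftarrow>\<eta>. constr_size c)"

definition possible_world_ic :: "'p db \<Rightarrow> 'p constr list \<Rightarrow> 'p fact set \<Rightarrow> bool" where
  "possible_world_ic I \<eta> W \<longleftrightarrow> possible_world I W \<and> (\<forall>c\<in>set \<eta>. satisfies W c)"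

definition consistent :: "'p db \<Rightarrow> 'p constr list \<Rightarrow> bool" where
  "consistent I \<eta> \<longleftrightarrow> (\<exists>W. possible_world_ic I \<eta> W)"

end

theory Submission
  imports Defs
begin

text \<open>Take any possible world \<open>W\<close> of \<open>\<langle>\<I>, \<eta>\<rangle>\<close>. For every fact \<open>d\<close> of \<open>D\<close> fix one fact of \<open>W\<close>
  above it, and let \<open>V\<^sub>0\<close> consist of their values together with the constants of \<open>\<I>\<close> and \<open>\<eta>\<close>;
  then \<open>V\<^sub>0\<close> has at most \<open>2N\<close> elements, \<open>N = size(\<I>) + size(\<eta>)\<close>. Keep only the facts of \<open>W\<close>
  over \<open>V\<^sub>0\<close> and rename \<open>V\<^sub>0\<close> by an order-preserving map fixing the constants, which squeezes
  the other values into the gaps between constants, so that all values stay below \<open>2\<^sup>N + 2N\<close>.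
  The chosen facts keep \<open>\<I>\<^sub>t\<close> covered, and since the constraints only compare values by
  \<open>=\<close> and \<open>\<le>\<close> and every variable occurs in a base atom of the body, they survive both the
  restriction and the renaming. The result has polynomially many facts, each of size \<open>O(N)\<close>.\<close>

lemma bitlen_pos: "0 < bitlen n"
  by (induction n rule: bitlen.induct) simp

lemma less_power_bitlen: "n < 2 ^ bitlen n"
proof (induction n rule: bitlen.induct)
  case (1 n)
  then show ?case by (cases "n \<le> 1") simp_all
qed

lemma bitlen_le_if_less_power: "n < 2 ^ k \<Longrightarrow> 0 < k \<Longrightarrow> bitlen n \<le> k"
proof (induction n arbitrary: k rule: bitlen.induct)
  case (1 n)
  show ?case
  proof (cases "n \<le> 1")
    case False
    then obtain k' where k: "k = Suc k'" "0 < k'"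
      using "1.prems" by (cases k; cases "k - 1") auto
    then have "bitlen (n div 2) \<le> k'" using "1" False by simp
    then show ?thesis using False k by simp
  qed (use "1.prems" in simp)
qed

declare bitlen.simps [simp del]

lemma definite_val_iff [simp]: "definite_val v \<longleftrightarrow> 0 < v"
  by (simp add: definite_val_def nullv_def)

definition map_fact :: "(val \<Rightarrow> val) \<Rightarrow> 'p fact \<Rightarrow> 'p fact" where
  "map_fact h f = (fst f, map h (snd f))"

definition vals :: "'p fact set \<Rightarrow> val set" where
  "vals S = (\<Union>f\<in>S. set (snd f))"

definition facts_over :: "('p \<Rightarrow> nat) \<Rightarrow> val set \<Rightarrow> 'p fact set" where
  "facts_over ar S = {f. set (snd f) \<subseteq> S \<and> length (snd f) = ar (fst f)}"

lemma less_inf_refl: "less_inf a a"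
  by (simp add: less_inf_def)

lemma less_inf_trans:
  assumes "less_inf a b" "less_inf b c"
  shows "less_inf a c"
  unfolding less_inf_def nullv_def
proof (intro conjI allI impI)
  show "fst a = fst c" "length (snd a) = length (snd c)" using assms by (auto simp: less_inf_def)
  fix i assume "i < length (snd a)"
  then have "snd a ! i = snd b ! i \<or> snd a ! i = 0" "snd b ! i = snd c ! i \<or> snd b ! i = 0"
    using assms by (auto simp: less_inf_def nullv_def)
  then show "snd a ! i = snd c ! i \<or> snd a ! i = 0" by auto
qed

lemma definite_less_inf_eq:
  assumes "definite_fact a" "less_inf a b"
  shows "a = b"
proof -
  have "\<forall>v\<in>set (snd a). v \<noteq> nullv" using assms(1) by (auto simp: definite_fact_def nullv_def)
  then have "snd a = snd b"
    using assms(2) by (auto simp: less_inf_def intro!: nth_equalityI)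
  then show ?thesis using assms(2) by (simp add: less_inf_def prod_eq_iff)
qed

lemma less_inf_map_fact:
  assumes "less_inf d f" "\<forall>v\<in>set (snd d). v \<noteq> 0 \<longrightarrow> h v = v"
  shows "less_inf d (map_fact h f)"
  using assms by (auto simp: less_inf_def map_fact_def nullv_def) (metis gr_implies_not0 nth_mem)

lemma less_inf_of_map_fact:
  assumes "less_inf e (map_fact h f)" "set (snd f) \<subseteq> V" "inj_on h V"
    and "\<forall>v\<in>set (snd e). v \<noteq> 0 \<longrightarrow> v \<in> V \<and> h v = v"
  shows "less_inf e f"
  unfolding less_inf_def nullv_def
proof (intro conjI allI impI)
  show "fst e = fst f" "length (snd e) = length (snd f)"
    using assms(1) by (auto simp: less_inf_def map_fact_def)
  fix i assume i: "i < length (snd e)"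
  show "snd e ! i = snd f ! i \<or> snd e ! i = 0"
  proof (cases "snd e ! i = 0")
    case False
    then have "h (snd e ! i) = h (snd f ! i)" "snd e ! i \<in> V" "snd f ! i \<in> V"
      using assms i nth_mem by (fastforce simp: less_inf_def map_fact_def nullv_def)+
    then show ?thesis using assms(3) by (simp add: inj_on_eq_iff)
  qed simp
qed

section \<open>Order-preserving compression of values\<close>

definition last_below :: "nat set \<Rightarrow> nat \<Rightarrow> nat" where
  "last_below K v = Max (insert 0 {k\<in>K. k < v})"

definition compress :: "nat set \<Rightarrow> nat set \<Rightarrow> nat \<Rightarrow> nat" where
  "compress K V v =
     (if v \<in> K then v else last_below K v + card {u \<in> V - K. last_below K v < u \<and> u \<le> v})"

lemma compress_fixes: "k \<in> K \<Longrightarrow> compress K V k = k"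
  by (simp add: compress_def)

context
  fixes K :: "nat set"
  assumes finite_K: "finite K"
begin

lemma last_below_in: "last_below K v \<in> insert 0 K"
  using Max_in[of "insert 0 {k\<in>K. k < v}"] finite_K by (auto simp: last_below_def)

lemma le_last_below: "k \<in> K \<Longrightarrow> k < v \<Longrightarrow> k \<le> last_below K v"
  unfolding last_below_def using finite_K by (intro Max_ge) auto

lemma last_below_less: "0 < v \<Longrightarrow> last_below K v < v"
  unfolding last_below_def using finite_K by (subst Max_less_iff) auto

lemma last_below_mono: "u \<le> v \<Longrightarrow> last_below K u \<le> last_below K v"
  unfolding last_below_def using finite_K by (intro Max_mono) auto

lemma compress_le: "v \<notin> K \<Longrightarrow> 0 < v \<Longrightarrow> compress K V v \<le> v"
proof -
  assume v: "v \<notin> K" "0 < v"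
  have "card {u \<in> V - K. last_below K v < u \<and> u \<le> v} \<le> card {last_below K v<..v}"
    by (intro card_mono) auto
  then show ?thesis using v last_below_less[of v] by (simp add: compress_def)
qed

lemma last_below_less_compress:
  assumes "finite V" "v \<in> V" "v \<notin> K" "0 < v"
  shows "last_below K v < compress K V v"
proof -
  have "v \<in> {u \<in> V - K. last_below K v < u \<and> u \<le> v}" using assms last_below_less[of v] by auto
  then have "card {u \<in> V - K. last_below K v < u \<and> u \<le> v} > 0"
    using assms(1) by (auto simp: card_gt_0_iff)
  then show ?thesis using assms(3) by (simp add: compress_def)
qed

lemma compress_less:
  assumes "finite V" "\<forall>k\<in>K. k < M" "0 < M"
  shows "compress K V v < M + card V"
proof (cases "v \<in> K")
  case False
  have "last_below K v < M" using last_below_in[of v] assms by auto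
  moreover have "card {u \<in> V - K. last_below K v < u \<and> u \<le> v} \<le> card V"
    using assms by (intro card_mono) auto
  ultimately show ?thesis using False by (simp add: compress_def)
qed (use assms in \<open>auto simp: compress_def\<close>)

lemma strict_mono_on_compress:
  assumes fin: "finite V" and pos: "0 \<notin> V"
  shows "strict_mono_on V (compress K V)"
proof (rule strict_mono_onI)
  fix u v assume uv: "u \<in> V" "v \<in> V" "u < v"
  have "0 < u" "0 < v" using uv pos by (metis gr0I)+
  consider "u \<in> K" "v \<in> K" | "u \<in> K" "v \<notin> K" | "u \<notin> K" "v \<in> K" | "u \<notin> K" "v \<notin> K"
    by blast
  then show "compress K V u < compress K V v"
  proof cases
    case 1
    then show ?thesis using uv by (simp add: compress_fixes)
  next
    case 2
    then have "u \<le> last_below K v" using le_last_below uv by simp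
    then show ?thesis
      using last_below_less_compress[OF fin uv(2) 2(2) \<open>0 < v\<close>] 2(1) by (simp add: compress_fixes)
  next
    case 3
    then show ?thesis using compress_le[OF 3(1) \<open>0 < u\<close>, of V] uv by (simp add: compress_fixes)
  next
    case 4
    show ?thesis
    proof (cases "last_below K u = last_below K v")
      case True
      let ?S = "\<lambda>w. {x \<in> V - K. last_below K w < x \<and> x \<le> w}"
      have "?S u \<subseteq> ?S v" using True uv(3) by auto
      moreover have "v \<in> ?S v" "v \<notin> ?S u" using uv 4 last_below_less[OF \<open>0 < v\<close>] by auto
      ultimately have "card (?S u) < card (?S v)" using fin by (intro psubset_card_mono) auto
      then show ?thesis using 4 True by (simp add: compress_def)
    next
      case False
      \<comment> \<open>then an element of \<open>K\<close> separates \<open>u\<close> from \<open>v\<close>\<close>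
      then have lt: "last_below K u < last_below K v"
        using last_below_mono[of u v] uv(3) by simp
      then have K: "last_below K v \<in> K" using last_below_in[of v] by auto
      then have "\<not> last_below K v < u" using le_last_below[of "last_below K v" u] lt by auto
      moreover have "last_below K v \<noteq> u" using K 4(1) by auto
      ultimately have "u < last_below K v" by simp
      then show ?thesis
        using compress_le[OF 4(1) \<open>0 < u\<close>, of V] last_below_less_compress[OF fin uv(2) 4(2) \<open>0 < v\<close>]
        by simp
    qed
  qed
qed

end

lemma order_compression:
  fixes K V :: "nat set"
  assumes "finite K" "finite V" "0 \<notin> V" "\<forall>k\<in>K. k < M" "0 < M"
  shows "\<exists>h. strict_mono_on V h \<and> (\<forall>k\<in>K. h k = k) \<and> (\<forall>v\<in>V. 0 < h v \<and> h v < M + card V)"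
proof (intro exI conjI ballI)
  show "strict_mono_on V (compress K V)" using strict_mono_on_compress assms by blast
  fix v assume "v \<in> V"
  show "compress K V v < M + card V" using compress_less assms by blast
  have "0 < v" using assms(3) \<open>v \<in> V\<close> by (metis gr0I)
  then show "0 < compress K V v"
    using last_below_less_compress[OF assms(1,2) \<open>v \<in> V\<close>]
    by (cases "v \<in> K") (simp_all add: compress_fixes)
qed (simp add: compress_fixes)

section \<open>Size bounds\<close>

definition trm_size :: "trm \<Rightarrow> nat" where
  "trm_size t = (case t of Var x \<Rightarrow> 1 | Const k \<Rightarrow> bitlen k)"

fun atom_size :: "'p atom \<Rightarrow> nat" where
  "atom_size (Base p ts) = (\<Sum>t\<leftarrow>ts. trm_size t)"
| "atom_size (Eq s t) = trm_size s + trm_size t"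
| "atom_size (Leq s t) = trm_size s + trm_size t"

lemma constr_size_eq:
  fixes c :: "'p constr"
  shows "constr_size c = 1 + length (exvars c) + length (allvars c) + (\<Sum>a\<leftarrow>body c @ head c. 1 + atom_size a)"
proof -
  have "(case a of
        Base p ts \<Rightarrow> (\<Sum>t\<leftarrow>ts. (case t of Var x \<Rightarrow> 1 | Const k \<Rightarrow> bitlen k))
      | Eq s t \<Rightarrow> (case s of Var x \<Rightarrow> 1 | Const k \<Rightarrow> bitlen k) + (case t of Var x \<Rightarrow> 1 | Const k \<Rightarrow> bitlen k)
      | Leq s t \<Rightarrow> (case s of Var x \<Rightarrow> 1 | Const k \<Rightarrow> bitlen k) + (case t of Var x \<Rightarrow> 1 | Const k \<Rightarrow> bitlen k))
      = atom_size a" for a :: "'p atom"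
    by (cases a) (simp_all only: atom.case atom_size.simps trm_size_def[abs_def])
  then show ?thesis by (simp add: constr_size_def)
qed

fun trm_consts :: "trm \<Rightarrow> val list" where
  "trm_consts (Var x) = []"
| "trm_consts (Const c) = [c]"

fun atom_consts :: "'p atom \<Rightarrow> val list" where
  "atom_consts (Base p ts) = concat (map trm_consts ts)"
| "atom_consts (Eq s t) = trm_consts s @ trm_consts t"
| "atom_consts (Leq s t) = trm_consts s @ trm_consts t"

definition constr_consts :: "'p constr \<Rightarrow> val list" where
  "constr_consts c = concat (map atom_consts (body c @ head c))"

definition constrs_consts :: "'p constr list \<Rightarrow> val list" where
  "constrs_consts \<eta> = concat (map constr_consts \<eta>)"

lemma sum_list_map_concat: "sum_list (map f (concat xss)) = (\<Sum>xs\<leftarrow>xss. sum_list (map f xs))"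
  by (induction xss) auto

lemma bitlen_trm_consts: "(\<Sum>k\<leftarrow>trm_consts t. bitlen k) \<le> trm_size t"
  by (cases t) (simp_all add: trm_size_def)

lemma bitlen_atom_consts: "(\<Sum>k\<leftarrow>atom_consts a. bitlen k) \<le> atom_size a"
proof (cases a)
  case (Base p ts)
  then show ?thesis
    by (simp add: sum_list_map_concat o_def sum_list_mono bitlen_trm_consts)
qed (use bitlen_trm_consts in \<open>simp_all add: add_mono\<close>)

lemma bitlen_constrs_consts: "(\<Sum>k\<leftarrow>constrs_consts \<eta>. bitlen k) \<le> constrs_size \<eta>"
proof -
  have "(\<Sum>k\<leftarrow>constr_consts c. bitlen k) \<le> constr_size c" for c :: "'p constr"
  proof -
    have "(\<Sum>k\<leftarrow>constr_consts c. bitlen k) = (\<Sum>a\<leftarrow>body c @ head c. \<Sum>k\<leftarrow>atom_consts a. bitlen k)"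
      by (simp only: constr_consts_def sum_list_map_concat map_map o_def)
    also have "\<dots> \<le> (\<Sum>a\<leftarrow>body c @ head c. 1 + atom_size a)"
      by (intro sum_list_mono trans_le_add2 bitlen_atom_consts)
    finally show ?thesis by (simp add: constr_size_eq)
  qed
  then have "(\<Sum>c\<leftarrow>\<eta>. \<Sum>k\<leftarrow>constr_consts c. bitlen k) \<le> (\<Sum>c\<leftarrow>\<eta>. constr_size c)"
    by (rule sum_list_mono)
  then show ?thesis by (simp add: constrs_consts_def constrs_size_def sum_list_map_concat o_def)
qed

lemma length_le_sum_bitlen: "length xs \<le> (\<Sum>x\<leftarrow>xs. bitlen x)"
proof (induction xs)
  case (Cons x xs)
  then show ?case using bitlen_pos[of x] by simp
qed simp

lemma card_set_le_sum_bitlen: "card (set xs) \<le> (\<Sum>x\<leftarrow>xs. bitlen x)"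
  using card_length[of xs] length_le_sum_bitlen[of xs] by linarith

lemma bitlen_le_sum_bitlen: "x \<in> set xs \<Longrightarrow> bitlen x \<le> (\<Sum>x\<leftarrow>xs. bitlen x)"
  using member_le_sum_list[of "bitlen x" "map bitlen xs"] by simp

lemma card_vals_le_facts_size: "finite S \<Longrightarrow> card (vals S) \<le> facts_size S"
proof -
  assume "finite S"
  then have "card (vals S) \<le> (\<Sum>f\<in>S. card (set (snd f)))" unfolding vals_def by (rule card_UN_le)
  also have "\<dots> \<le> facts_size S"
    unfolding facts_size_def fact_size_def using card_set_le_sum_bitlen
    by (intro sum_mono) (simp add: le_SucI)
  finally show ?thesis .
qed

lemma bitlen_le_facts_size: "finite S \<Longrightarrow> v \<in> vals S \<Longrightarrow> bitlen v \<le> facts_size S"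
proof -
  assume "finite S" "v \<in> vals S"
  then obtain f where f: "f \<in> S" "v \<in> set (snd f)" by (auto simp: vals_def)
  have "bitlen v \<le> fact_size f" using bitlen_le_sum_bitlen[OF f(2)] by (simp add: fact_size_def)
  also have "\<dots> \<le> facts_size S"
    unfolding facts_size_def using \<open>finite S\<close> f(1) by (intro member_le_sum) auto
  finally show ?thesis .
qed

lemma facts_over_eq: "facts_over ar S = (\<Union>p. Pair p ` {xs. set xs \<subseteq> S \<and> length xs = ar p})"
  by (auto simp: facts_over_def image_iff)

lemma finite_facts_over: "finite S \<Longrightarrow> finite (facts_over (ar :: 'p::finite \<Rightarrow> nat) S)"
  unfolding facts_over_eq by (auto intro: finite_lists_length_eq)

lemma card_facts_over_le:
  fixes ar :: "'p::finite \<Rightarrow> nat"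
  assumes "finite S"
  shows "card (facts_over ar S) \<le> card (UNIV :: 'p set) * (card S + 1) ^ Max (range ar)"
proof -
  let ?L = "\<lambda>p. {xs. set xs \<subseteq> S \<and> length xs = ar p}"
  have "card (facts_over ar S) \<le> (\<Sum>p\<in>UNIV. card (Pair p ` ?L p))"
    unfolding facts_over_eq by (rule card_UN_le) simp
  also have "\<dots> \<le> (\<Sum>p\<in>(UNIV::'p set). (card S + 1) ^ Max (range ar))"
  proof (rule sum_mono)
    fix p
    have "card (Pair p ` ?L p) \<le> card (?L p)"
      using assms by (intro card_image_le finite_lists_length_eq)
    also have "\<dots> = card S ^ ar p" using assms by (rule card_lists_length_eq)
    also have "\<dots> \<le> (card S + 1) ^ ar p" by (rule power_mono) simp_all
    also have "\<dots> \<le> (card S + 1) ^ Max (range ar)" by (rule power_increasing) simp_all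
    finally show "card (Pair p ` ?L p) \<le> (card S + 1) ^ Max (range ar)" .
  qed
  finally show ?thesis by simp
qed

lemma facts_size_le_if_facts_over:
  fixes ar :: "'p::finite \<Rightarrow> nat"
  assumes V: "V \<subseteq> facts_over ar S" and S: "finite S" "card S \<le> M" "\<forall>v\<in>S. bitlen v \<le> L"
  shows "facts_size V \<le> card (UNIV :: 'p set) * (M + 1) ^ Max (range ar) * (1 + Max (range ar) * L)"
proof -
  let ?A = "Max (range ar)"
  have "fact_size f \<le> 1 + ?A * L" if f: "f \<in> V" for f
  proof -
    have "\<forall>v\<in>set (snd f). bitlen v \<le> L" and len: "length (snd f) = ar (fst f)"
      using f V S(3) by (auto simp: facts_over_def)
    then have "(\<Sum>v\<leftarrow>snd f. bitlen v) \<le> (\<Sum>v\<leftarrow>snd f. L)" by (intro sum_list_mono) blast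
    also have "\<dots> = length (snd f) * L" by (simp add: sum_list_triv)
    also have "\<dots> \<le> ?A * L" unfolding len by (intro mult_le_mono1) simp
    finally show ?thesis by (simp add: fact_size_def)
  qed
  then have "facts_size V \<le> card V * (1 + ?A * L)"
    unfolding facts_size_def using sum_mono[of V fact_size "\<lambda>_. 1 + ?A * L"] by simp
  also have "card V \<le> card (UNIV :: 'p set) * (M + 1) ^ ?A"
  proof -
    have "card V \<le> card (UNIV :: 'p set) * (card S + 1) ^ ?A"
      using card_mono[OF finite_facts_over[OF S(1)] V] card_facts_over_le[OF S(1), of ar] by linarith
    also have "\<dots> \<le> card (UNIV :: 'p set) * (M + 1) ^ ?A"
      using S(2) by (intro mult_le_mono2 power_mono) simp_all
    finally show ?thesis .
  qed
  then have "card V * (1 + ?A * L) \<le> card (UNIV :: 'p set) * (M + 1) ^ ?A * (1 + ?A * L)"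
    by (rule mult_le_mono1)
  finally show ?thesis .
qed

section \<open>Renaming possible worlds and constraints\<close>

lemma definite_world_fact_iff:
  assumes "definite_fact f"
  shows "f \<in> I_t (D, E) \<union> I_u (D, E) \<longleftrightarrow>
           (\<exists>d\<in>D. less_inf d f) \<and> (f \<in> D \<or> (\<forall>e\<in>E. \<not> less_inf e f))"
proof -
  have below: "f \<in> down D \<longleftrightarrow> f \<in> D"
    unfolding down_def using definite_less_inf_eq[OF assms] less_inf_refl by blast
  have "compat d f \<longleftrightarrow> less_inf d f" for d
    unfolding compat_def using definite_less_inf_eq[OF assms] less_inf_refl by blast
  then have "f \<in> compat_set D \<longleftrightarrow> (\<exists>d\<in>D. less_inf d f)" by (simp add: compat_set_def)
  then have "f \<in> I_t (D, E) \<union> I_u (D, E) \<longleftrightarrow>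
               f \<in> D \<or> (\<exists>d\<in>D. less_inf d f) \<and> (\<forall>e\<in>E. \<not> less_inf e f)"
    using below unfolding I_t_def I_u_def tilde_def up_def by auto
  then show ?thesis using less_inf_refl[of f] by blast
qed

lemma possible_world_map_fact:
  assumes W: "possible_world (D, E) W"
    and witnesses: "\<forall>d\<in>D. \<exists>w\<in>W. less_inf d w \<and> set (snd w) \<subseteq> V0"
    and inj: "inj_on h V0" and pos: "\<forall>v\<in>V0. 0 < h v"
    and fixes_input: "\<forall>v\<in>vals D \<union> vals E. 0 < v \<longrightarrow> v \<in> V0 \<and> h v = v"
  shows "possible_world (D, E) (map_fact h ` {f\<in>W. set (snd f) \<subseteq> V0})"
    (is "possible_world _ ?V")
proof -
  have W_definite: "\<forall>f\<in>W. definite_fact f" and W_sub: "W \<subseteq> I_t (D, E) \<union> I_u (D, E)"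
    using W by (simp_all add: possible_world_def)
  have W_facts: "(\<exists>d\<in>D. less_inf d f) \<and> (f \<in> D \<or> (\<forall>e\<in>E. \<not> less_inf e f))" if "f \<in> W" for f
    using W_sub definite_world_fact_iff[of f D E] W_definite that by blast
  have fixes_DE: "\<forall>v\<in>set (snd d). v \<noteq> 0 \<longrightarrow> v \<in> V0 \<and> h v = v" if "d \<in> D \<union> E" for d
    using fixes_input that unfolding vals_def by blast
  have fixes_D: "\<forall>v\<in>set (snd d). v \<noteq> 0 \<longrightarrow> h v = v" if "d \<in> D" for d
    using fixes_DE that by blast
  have V_definite: "\<forall>g\<in>?V. definite_fact g"
    using pos unfolding map_fact_def definite_fact_def by fastforce
  have "I_t (D, E) \<subseteq> down ?V"
  proof
    fix a assume "a \<in> I_t (D, E)"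
    then obtain d where d: "d \<in> D" "less_inf a d" by (auto simp: I_t_def down_def)
    obtain w where w: "w \<in> W" "less_inf d w" "set (snd w) \<subseteq> V0" using witnesses d(1) by blast
    have "less_inf a (map_fact h w)"
      using less_inf_trans[OF d(2) less_inf_map_fact[OF w(2) fixes_D[OF d(1)]]] .
    then show "a \<in> down ?V" unfolding down_def using w by blast
  qed
  moreover have "g \<in> I_t (D, E) \<union> I_u (D, E)" if "g \<in> ?V" for g
  proof -
    obtain f where f: "f \<in> W" "set (snd f) \<subseteq> V0" and g: "g = map_fact h f"
      using \<open>g \<in> ?V\<close> by blast
    obtain d where d: "d \<in> D" "less_inf d f" using W_facts[OF f(1)] by blast
    have "less_inf d g" unfolding g using less_inf_map_fact[OF d(2) fixes_D[OF d(1)]] .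
    moreover have "g \<in> D \<or> (\<forall>e\<in>E. \<not> less_inf e g)"
    proof (cases "f \<in> D")
      case True
      moreover have "definite_fact f" using W_definite f(1) by blast
      ultimately have "\<forall>v\<in>set (snd f). h v = v"
        using fixes_D by (auto simp: definite_fact_def)
      then have "g = f" by (simp add: g map_fact_def map_idI)
      then show ?thesis using True by simp
    next
      case False
      have "less_inf e f" if "e \<in> E" "less_inf e g" for e
        using less_inf_of_map_fact[OF that(2)[unfolded g] f(2) inj] fixes_DE that(1) by blast
      then show ?thesis using False W_facts[OF f(1)] by blast
    qed
    moreover have "definite_fact g" using V_definite \<open>g \<in> ?V\<close> by blast
    ultimately show ?thesis using definite_world_fact_iff[of g D E] d(1) by blast
  qed
  ultimately show ?thesis using V_definite unfolding possible_world_def by blast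
qed

fun atom_trms :: "'p atom \<Rightarrow> trm set" where
  "atom_trms (Base p ts) = set ts"
| "atom_trms (Eq s t) = {s, t}"
| "atom_trms (Leq s t) = {s, t}"

lemma atom_holds_restrict_iff:
  assumes "\<forall>t\<in>atom_trms a. trm_eval \<tau> t \<in> V"
  shows "atom_holds {f\<in>W. set (snd f) \<subseteq> V} \<tau> a \<longleftrightarrow> atom_holds W \<tau> a"
  using assms by (cases a) auto

lemma atom_holds_map_fact_iff:
  assumes h: "strict_mono_on V h" and W: "\<forall>f\<in>W. set (snd f) \<subseteq> V"
    and agree: "\<forall>t\<in>atom_trms a. trm_eval \<tau>' t \<in> V \<and> h (trm_eval \<tau>' t) = trm_eval \<tau> t"
  shows "atom_holds (map_fact h ` W) \<tau> a \<longleftrightarrow> atom_holds W \<tau>' a"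
proof (cases a)
  case (Base p ts)
  have inj: "inj_on h V" using h by (rule strict_mono_on_imp_inj_on)
  have eval: "map (trm_eval \<tau>) ts = map h (map (trm_eval \<tau>') ts)" "set (map (trm_eval \<tau>') ts) \<subseteq> V"
    using agree Base by auto
  have "(p, map (trm_eval \<tau>) ts) = map_fact h f \<longleftrightarrow> f = (p, map (trm_eval \<tau>') ts)" if "f \<in> W" for f
  proof -
    have "inj_on h (set (snd f) \<union> set (map (trm_eval \<tau>') ts))"
      using W that eval(2) by (blast intro: inj_on_subset[OF inj])
    then have "map h (map (trm_eval \<tau>') ts) = map h (snd f) \<longleftrightarrow> map (trm_eval \<tau>') ts = snd f"
      using inj_on_map_eq_map by (metis Un_commute)
    then show ?thesis unfolding map_fact_def eval(1) by (auto simp: prod_eq_iff)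
  qed
  then show ?thesis using Base by (auto simp: image_iff)
next
  case (Eq s t)
  then have "trm_eval \<tau>' s \<in> V" "h (trm_eval \<tau>' s) = trm_eval \<tau> s"
    "trm_eval \<tau>' t \<in> V" "h (trm_eval \<tau>' t) = trm_eval \<tau> t"
    using agree by auto
  then show ?thesis using Eq strict_mono_on_eq[OF h] by (metis atom_holds.simps(2))
next
  case (Leq s t)
  then have "trm_eval \<tau>' s \<in> V" "h (trm_eval \<tau>' s) = trm_eval \<tau> s"
    "trm_eval \<tau>' t \<in> V" "h (trm_eval \<tau>' t) = trm_eval \<tau> t"
    using agree by auto
  then show ?thesis using Leq strict_mono_on_less_eq[OF h] by (metis atom_holds.simps(3))
qed

lemma body_var_in_vals:
  assumes "constr_wf ar c" "x \<in> set (exvars c) \<union> set (allvars c)"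
    and "\<forall>a\<in>set (body c). atom_holds W \<tau> a"
  shows "\<tau> x \<in> vals W"
proof -
  obtain b where b: "b \<in> set (body c)" "is_base b" "x \<in> atom_vars b"
    using assms(1,2) unfolding constr_wf_def by blast
  from b(2) obtain p ts where b': "b = Base p ts" by (metis is_base.elims(2))
  then obtain t where t: "t \<in> set ts" "x \<in> trm_vars t" using b(3) by auto
  have "t = Var x" using t(2) by (cases t) auto
  then show ?thesis using t(1) assms(3) b(1) b' by (force simp: vals_def)
qed

lemma trm_eval_agree:
  assumes "t \<in> atom_trms a" "atom_wf ar a" "atom_vars a \<subseteq> Y"
    and "\<forall>y\<in>Y. \<tau>' y \<in> V \<and> h (\<tau>' y) = \<tau> y"
    and "\<forall>k\<in>set (atom_consts a). 0 < k \<longrightarrow> k \<in> V \<and> h k = k"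
  shows "trm_eval \<tau>' t \<in> V \<and> h (trm_eval \<tau>' t) = trm_eval \<tau> t"
proof -
  have "trm_vars t \<subseteq> atom_vars a" "set (trm_consts t) \<subseteq> set (atom_consts a)" "trm_ok t"
    using assms(1,2) by (cases a; auto)+
  then show ?thesis using assms(3-5) by (cases t) auto
qed

lemma satisfies_map_fact:
  assumes cwf: "constr_wf ar c" and sat: "satisfies W c"
    and V: "finite V" "0 \<notin> V" and h: "strict_mono_on V h"
    and fixes_consts: "\<forall>k\<in>set (constr_consts c). 0 < k \<longrightarrow> k \<in> V \<and> h k = k"
  shows "satisfies (map_fact h ` {f\<in>W. set (snd f) \<subseteq> V}) c"
    (is "satisfies ?V c")
proof -
  let ?X = "set (exvars c) \<union> set (allvars c)" and ?Y = "set (allvars c)"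
  obtain \<sigma> where \<sigma>: "\<And>\<tau>. \<forall>y\<in>?Y. 0 < \<tau> y \<Longrightarrow> \<forall>x. x \<notin> ?Y \<longrightarrow> \<tau> x = \<sigma> x \<Longrightarrow>
      \<forall>a\<in>set (body c). atom_holds W \<tau> a \<Longrightarrow> \<exists>b\<in>set (head c). atom_holds W \<tau> b"
    using sat unfolding satisfies_def definite_val_iff by blast
  \<comment> \<open>Existential variables are sent outside the active domain of \<open>?V\<close>, which falsifies the body
    whenever one of them is not shadowed by a universal variable.\<close>
  define B where "B = Suc (Max (h ` V))"
  have vals_V: "vals ?V \<subseteq> h ` V" by (auto simp: vals_def map_fact_def)
  have B_fresh: "B \<notin> h ` V" using V(1) Max_ge[of "h ` V"] by (fastforce simp: B_def)
  show ?thesis unfolding satisfies_def definite_val_iff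
  proof (intro exI[of _ "\<lambda>_. B"] conjI ballI allI impI)
    fix \<tau> assume \<tau>: "(\<forall>y\<in>?Y. 0 < \<tau> y) \<and> (\<forall>x. x \<notin> ?Y \<longrightarrow> \<tau> x = B)"
      and body: "\<forall>a\<in>set (body c). atom_holds ?V \<tau> a"
    have in_range: "\<tau> x \<in> h ` V" if "x \<in> ?X" for x
      using body_var_in_vals[OF cwf that body] vals_V by blast
    then have X_Y: "?X \<subseteq> ?Y" using \<tau> B_fresh by (metis subsetI)
    define \<tau>' where "\<tau>' y = (if y \<in> ?Y then inv_into V h (\<tau> y) else \<sigma> y)" for y
    have \<tau>'_Y: "\<forall>y\<in>?Y. \<tau>' y \<in> V \<and> h (\<tau>' y) = \<tau> y"
      using in_range by (auto simp: \<tau>'_def inv_into_into f_inv_into_f)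
    have agree: "\<forall>t\<in>atom_trms a. trm_eval \<tau>' t \<in> V \<and> h (trm_eval \<tau>' t) = trm_eval \<tau> t"
      if "a \<in> set (body c) \<union> set (head c)" for a
    proof
      fix t assume "t \<in> atom_trms a"
      moreover have "atom_wf ar a" "atom_vars a \<subseteq> ?Y" using cwf that X_Y by (auto simp: constr_wf_def)
      moreover have "\<forall>k\<in>set (atom_consts a). 0 < k \<longrightarrow> k \<in> V \<and> h k = k"
        using fixes_consts that by (auto simp: constr_consts_def)
      ultimately show "trm_eval \<tau>' t \<in> V \<and> h (trm_eval \<tau>' t) = trm_eval \<tau> t"
        using trm_eval_agree \<tau>'_Y by blast
    qed
    have W_restr: "\<forall>f\<in>{f\<in>W. set (snd f) \<subseteq> V}. set (snd f) \<subseteq> V" by blast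
    have transfer: "atom_holds ?V \<tau> a \<longleftrightarrow> atom_holds W \<tau>' a"
      if "a \<in> set (body c) \<union> set (head c)" for a
      using atom_holds_map_fact_iff[OF h W_restr agree[OF that]]
        atom_holds_restrict_iff[of a \<tau>' V W] agree[OF that] by blast
    have "\<forall>y\<in>?Y. 0 < \<tau>' y" using \<tau>'_Y V(2) by (metis gr0I)
    moreover have "\<forall>x. x \<notin> ?Y \<longrightarrow> \<tau>' x = \<sigma> x" by (simp add: \<tau>'_def)
    moreover have "\<forall>a\<in>set (body c). atom_holds W \<tau>' a" using body transfer by blast
    ultimately show "\<exists>b\<in>set (head c). atom_holds ?V \<tau> b" using \<sigma> transfer by blast
  qed (simp add: B_def)
qed

lemma base_fact_if_possible_world:
  assumes "wf_db ar (D, E)" "possible_world (D, E) W" "f \<in> W"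
  shows "base_fact ar f"
proof -
  have "definite_fact f" "f \<in> I_t (D, E) \<union> I_u (D, E)"
    using assms(2,3) by (auto simp: possible_world_def)
  then obtain d where "d \<in> D" "less_inf d f" using definite_world_fact_iff by blast
  then show ?thesis using assms(1) by (auto simp: wf_db_def base_fact_def less_inf_def)
qed

lemma card_vals_le_if_less_inf:
  assumes "finite D" "\<forall>d\<in>D. less_inf d (w d)"
  shows "card (vals (w ` D)) \<le> facts_size D"
proof -
  have "card (vals (w ` D)) \<le> (\<Sum>d\<in>D. card (set (snd (w d))))"
    unfolding vals_def using assms(1) by (simp add: card_UN_le)
  also have "\<dots> \<le> (\<Sum>d\<in>D. fact_size d)"
  proof (rule sum_mono)
    fix d assume "d \<in> D"
    have "card (set (snd (w d))) \<le> length (snd d)"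
      using card_length[of "snd (w d)"] assms(2) \<open>d \<in> D\<close> by (simp add: less_inf_def)
    also have "\<dots> \<le> fact_size d" using length_le_sum_bitlen[of "snd d"] by (simp add: fact_size_def)
    finally show "card (set (snd (w d))) \<le> fact_size d" .
  qed
  finally show ?thesis by (simp add: facts_size_def)
qed

definition input_consts :: "'p db \<Rightarrow> 'p constr list \<Rightarrow> val set" where
  "input_consts I \<eta> = (vals (fst I) \<union> vals (snd I) \<union> set (constrs_consts \<eta>)) - {0}"

lemma finite_input_consts: "wf_db ar I \<Longrightarrow> finite (input_consts I \<eta>)"
  by (auto simp: input_consts_def wf_db_def vals_def)

lemma card_input_consts_le:
  assumes "wf_db ar I"
  shows "card (input_consts I \<eta>) \<le> db_size I + constrs_size \<eta>"
proof -
  have fin: "finite (fst I)" "finite (snd I)" using assms by (simp_all add: wf_db_def)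
  then have "card (input_consts I \<eta>)
               \<le> card (vals (fst I)) + card (vals (snd I)) + card (set (constrs_consts \<eta>))"
    unfolding input_consts_def
    by (meson card_Diff1_le card_Un_le add_le_mono order_trans order_refl)
  also have "\<dots> \<le> db_size I + constrs_size \<eta>"
    using card_vals_le_facts_size[OF fin(1)] card_vals_le_facts_size[OF fin(2)]
      card_set_le_sum_bitlen[of "constrs_consts \<eta>"] bitlen_constrs_consts[of \<eta>]
    by (simp add: db_size_def)
  finally show ?thesis .
qed

lemma input_consts_less_power:
  assumes "wf_db ar I" "k \<in> input_consts I \<eta>"
  shows "k < 2 ^ (db_size I + constrs_size \<eta>)"
proof -
  have fin: "finite (fst I)" "finite (snd I)" using assms(1) by (simp_all add: wf_db_def)
  have "bitlen k \<le> db_size I + constrs_size \<eta>"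
    using assms(2) bitlen_le_facts_size[OF fin(1)] bitlen_le_facts_size[OF fin(2)]
      bitlen_le_sum_bitlen[of k "constrs_consts \<eta>"] bitlen_constrs_consts[of \<eta>]
    by (fastforce simp: input_consts_def db_size_def)
  then have "(2::nat) ^ bitlen k \<le> 2 ^ (db_size I + constrs_size \<eta>)" by (simp add: power_increasing)
  then show ?thesis using less_power_bitlen[of k] by linarith
qed

lemma small_support:
  assumes wf: "wf_db ar I" and W: "possible_world I W"
  obtains V0 where "finite V0" "0 \<notin> V0" "input_consts I \<eta> \<subseteq> V0"
    "card V0 \<le> 2 * (db_size I + constrs_size \<eta>)"
    "\<forall>d\<in>fst I. \<exists>w\<in>W. less_inf d w \<and> set (snd w) \<subseteq> V0"
proof -
  let ?K = "input_consts I \<eta>"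
  have "\<exists>w\<in>W. less_inf d w" if "d \<in> fst I" for d
    using W that less_inf_refl[of d] by (auto simp: possible_world_def I_t_def down_def)
  then obtain w where w: "\<forall>d\<in>fst I. w d \<in> W \<and> less_inf d (w d)" by metis
  define V0 where "V0 = ?K \<union> vals (w ` fst I)"
  have fin: "finite (fst I)" using wf by (simp add: wf_db_def)
  show thesis
  proof
    show "finite V0"
      using finite_input_consts[OF wf] fin unfolding V0_def vals_def by auto
    show "0 \<notin> V0"
      using W w by (auto simp: V0_def input_consts_def vals_def possible_world_def definite_fact_def)
    show "card V0 \<le> 2 * (db_size I + constrs_size \<eta>)"
      using card_Un_le[of ?K "vals (w ` fst I)"] card_input_consts_le[OF wf, of \<eta>]
        card_vals_le_if_less_inf[OF fin, of w] w
      by (auto simp: V0_def db_size_def)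
    show "\<forall>d\<in>fst I. \<exists>w\<in>W. less_inf d w \<and> set (snd w) \<subseteq> V0"
      using w by (auto simp: V0_def vals_def)
  qed (simp add: V0_def)
qed

lemma small_possible_world:
  fixes ar :: "'p::finite \<Rightarrow> nat"
  assumes wf: "wf_db ar I" and cwf: "\<forall>c\<in>set \<eta>. constr_wf ar c" and W: "possible_world_ic I \<eta> W"
  defines "N \<equiv> db_size I + constrs_size \<eta>"
  shows "\<exists>V. possible_world_ic I \<eta> V \<and> finite V \<and>
           facts_size V \<le> card (UNIV :: 'p set) * (2 * N + 1) ^ Max (range ar) * (1 + Max (range ar) * (N + 2))"
proof -
  obtain D E where I: "I = (D, E)" by (cases I)
  let ?K = "input_consts I \<eta>"
  have W_world: "possible_world (D, E) W" and W_sat: "\<forall>c\<in>set \<eta>. satisfies W c"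
    using W I by (simp_all add: possible_world_ic_def)
  obtain V0 where V0: "finite V0" "0 \<notin> V0" "?K \<subseteq> V0" "card V0 \<le> 2 * N"
    and witnesses: "\<forall>d\<in>D. \<exists>w\<in>W. less_inf d w \<and> set (snd w) \<subseteq> V0"
    using small_support[OF wf, of W \<eta>] W_world I by (auto simp: N_def)
  have K_less: "\<forall>k\<in>?K. k < 2 ^ N" using input_consts_less_power[OF wf] by (simp add: N_def)
  obtain h where h: "strict_mono_on V0 h" "\<forall>k\<in>?K. h k = k"
    "\<forall>v\<in>V0. 0 < h v \<and> h v < 2 ^ N + card V0"
    using order_compression[OF finite_input_consts[OF wf] V0(1,2) K_less] by auto
  define V where "V = map_fact h ` {f\<in>W. set (snd f) \<subseteq> V0}"
  have "possible_world I V"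
    unfolding I V_def using h V0(3) strict_mono_on_imp_inj_on I
    by (intro possible_world_map_fact[OF W_world witnesses]) (auto simp: input_consts_def)
  moreover have "satisfies V c" if "c \<in> set \<eta>" for c
  proof -
    have "\<forall>k\<in>set (constr_consts c). 0 < k \<longrightarrow> k \<in> V0 \<and> h k = k"
      using that h(2) V0(3) by (auto simp: input_consts_def constrs_consts_def)
    then show ?thesis
      unfolding V_def using satisfies_map_fact that cwf W_sat V0(1,2) h(1) by blast
  qed
  moreover have V_facts: "V \<subseteq> facts_over ar (h ` V0)"
    using base_fact_if_possible_world[of ar D E W] wf W_world I
    by (force simp: V_def map_fact_def facts_over_def base_fact_def)
  moreover have "finite V"
    using finite_subset[OF V_facts finite_facts_over] V0(1) by blast
  moreover have "facts_size V \<le> card (UNIV :: 'p set) * (2 * N + 1) ^ Max (range ar) * (1 + Max (range ar) * (N + 2))"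
  proof (rule facts_size_le_if_facts_over[OF V_facts finite_imageI[OF V0(1)]])
    show "card (h ` V0) \<le> 2 * N" using card_image_le[OF V0(1), of h] V0(4) by linarith
    have "2 ^ N + 2 * N < (2::nat) ^ (N + 2)" using less_exp[of N] by (simp del: less_exp)
    then show "\<forall>v\<in>h ` V0. bitlen v \<le> N + 2"
      using h(3) V0(4) by (auto intro!: bitlen_le_if_less_power)
  qed
  ultimately show ?thesis unfolding possible_world_ic_def by blast
qed

theorem proposition6:
  fixes ar :: "'p::finite \<Rightarrow> nat"
  shows "\<exists>pol :: real poly. \<forall>(I :: 'p db) (\<eta> :: 'p constr list).
           wf_db ar I \<and> (\<forall>c\<in>set \<eta>. constr_wf ar c) \<and> consistent I \<eta> \<longrightarrow>
           (\<exists>V. possible_world_ic I \<eta> V \<and> finite V \<and>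
                real (facts_size V) \<le> poly pol (real (db_size I + constrs_size \<eta>)))"
proof -
  define A where "A = Max (range ar)"
  define C where "C = card (UNIV :: 'p set)"
  define pol :: "real poly" where "pol = smult (real C) ([:1, 2:] ^ A * [:1 + 2 * real A, real A:])"
  have poly_pol: "poly pol (real N) = real (C * (2 * N + 1) ^ A * (1 + A * (N + 2)))" for N
    by (simp add: pol_def algebra_simps)
  show ?thesis
  proof (intro exI[of _ pol] allI impI)
    fix I :: "'p db" and \<eta> :: "'p constr list"
    assume "wf_db ar I \<and> (\<forall>c\<in>set \<eta>. constr_wf ar c) \<and> consistent I \<eta>"
    then show "\<exists>V. possible_world_ic I \<eta> V \<and> finite V \<and>
                 real (facts_size V) \<le> poly pol (real (db_size I + constrs_size \<eta>))"
      using small_possible_world[of ar I \<eta>] unfolding poly_pol consistent_def A_def C_def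
      by (metis of_nat_mono)
  qed
qed

end
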